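(* Let $T$ be a forest with no isolated vertices and no open twins. Then $T$ is an iso-unique Grundy total domination graph if and only if $\gamma_{gr}^{t}(T)=n(T)$, where $n(T)$ is the number of vertices of $T$.
   Context: For a graph $G$, $N(v)$ denotes the open neighborhood of $v$. A sequence $(v_1,\ldots,v_k)$ of distinct vertices is an open neighborhood sequence if $N(v_i)\setminus\bigcup_{j=1}^{i-1}N(v_j)\neq\emptyset$ for each $i\in[k]$. The Grundy total domination number $\gamma_{gr}^{t}(G)$ is the maximum length of an open neighborhood sequence; the vertex set of such a maximum-length sequence is a Grundy total dominating set. $G$ is an iso-unique Grundy total domination graph if for every two Grundy total dominating sets $A,B$ there is an automorphism $\phi$ of $G$ with $\phi(A)=B$. Two distinct vertices $u,v$ are open twins if $N(u)=N(v)$; a vertex is an open twin if it has an open twin partner. *)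

theory Defs
  imports Main
begin

definition simple_graph :: "'a set \<Rightarrow> ('a \<Rightarrow> 'a \<Rightarrow> bool) \<Rightarrow> bool" where
  "simple_graph V E \<longleftrightarrow> finite V \<and> (\<forall>u v. E u v \<longrightarrow> E v u) \<and> (\<forall>v. \<not> E v v)
     \<and> (\<forall>u v. E u v \<longrightarrow> u \<in> V \<and> v \<in> V)"

definition nbhd :: "'a set \<Rightarrow> ('a \<Rightarrow> 'a \<Rightarrow> bool) \<Rightarrow> 'a \<Rightarrow> 'a set" where
  "nbhd V E v = {u \<in> V. E v u}"

definition is_cycle :: "'a set \<Rightarrow> ('a \<Rightarrow> 'a \<Rightarrow> bool) \<Rightarrow> 'a list \<Rightarrow> bool" where
  "is_cycle V E cs \<longleftrightarrow> length cs \<ge> 3 \<and> distinct cs \<and> set cs \<subseteq> V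
     \<and> (\<forall>i. Suc i < length cs \<longrightarrow> E (cs ! i) (cs ! Suc i))
     \<and> E (last cs) (hd cs)"

definition forest :: "'a set \<Rightarrow> ('a \<Rightarrow> 'a \<Rightarrow> bool) \<Rightarrow> bool" where
  "forest V E \<longleftrightarrow> simple_graph V E \<and> \<not> (\<exists>cs. is_cycle V E cs)"

definition no_isolated :: "'a set \<Rightarrow> ('a \<Rightarrow> 'a \<Rightarrow> bool) \<Rightarrow> bool" where
  "no_isolated V E \<longleftrightarrow> (\<forall>v\<in>V. nbhd V E v \<noteq> {})"

definition open_twins :: "'a set \<Rightarrow> ('a \<Rightarrow> 'a \<Rightarrow> bool) \<Rightarrow> 'a \<Rightarrow> 'a \<Rightarrow> bool" where
  "open_twins V E u v \<longleftrightarrow> u \<in> V \<and> v \<in> V \<and> u \<noteq> v \<and> nbhd V E u = nbhd V E v"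

definition no_open_twins :: "'a set \<Rightarrow> ('a \<Rightarrow> 'a \<Rightarrow> bool) \<Rightarrow> bool" where
  "no_open_twins V E \<longleftrightarrow> (\<nexists>u v. open_twins V E u v)"

definition open_nbhd_seq :: "'a set \<Rightarrow> ('a \<Rightarrow> 'a \<Rightarrow> bool) \<Rightarrow> 'a list \<Rightarrow> bool" where
  "open_nbhd_seq V E vs \<longleftrightarrow> distinct vs \<and> set vs \<subseteq> V
     \<and> (\<forall>i < length vs. nbhd V E (vs ! i) - (\<Union>j<i. nbhd V E (vs ! j)) \<noteq> {})"

definition grundy_total_dom_num :: "'a set \<Rightarrow> ('a \<Rightarrow> 'a \<Rightarrow> bool) \<Rightarrow> nat" where
  "grundy_total_dom_num V E = Max (length ` {vs. open_nbhd_seq V E vs})"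

definition grundy_total_dom_set :: "'a set \<Rightarrow> ('a \<Rightarrow> 'a \<Rightarrow> bool) \<Rightarrow> 'a set \<Rightarrow> bool" where
  "grundy_total_dom_set V E S \<longleftrightarrow>
     (\<exists>vs. open_nbhd_seq V E vs \<and> length vs = grundy_total_dom_num V E \<and> set vs = S)"

definition automorphism :: "'a set \<Rightarrow> ('a \<Rightarrow> 'a \<Rightarrow> bool) \<Rightarrow> ('a \<Rightarrow> 'a) \<Rightarrow> bool" where
  "automorphism V E \<phi> \<longleftrightarrow> bij_betw \<phi> V V \<and> (\<forall>u\<in>V. \<forall>v\<in>V. E (\<phi> u) (\<phi> v) \<longleftrightarrow> E u v)"

definition iso_unique_grundy_total :: "'a set \<Rightarrow> ('a \<Rightarrow> 'a \<Rightarrow> bool) \<Rightarrow> bool" where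
  "iso_unique_grundy_total V E \<longleftrightarrow>
     (\<forall>A B. grundy_total_dom_set V E A \<and> grundy_total_dom_set V E B
        \<longrightarrow> (\<exists>\<phi>. automorphism V E \<phi> \<and> \<phi> ` A = B))"

end

theory Submission
  imports Defs
begin

text \<open>If the Grundy total domination number equals n, the only Grundy total dominating set
is V itself and the identity is the required automorphism. Otherwise compare Grundy sequences
through the leaves, which every automorphism permutes. Without open twins, a leaf l missing
from a Grundy sequence can replace the first vertex that dominates its support vertex, so some
Grundy sequence contains all leaves. On the other hand, if the Grundy number is less than n,
some Grundy sequence misses a leaf, by induction on n: a forest has a leaf l whose support
vertex s has at most one non-leaf neighbour. Two leaves at s are open twins and cannot both
occur in a sequence. Otherwise deleting l and s lowers the Grundy number by exactly 2, and a
Grundy sequence of the smaller forest missing one of its leaves extends to one of the whole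
forest missing a leaf.\<close>

definition covered :: "'a set \<Rightarrow> ('a \<Rightarrow> 'a \<Rightarrow> bool) \<Rightarrow> 'a list \<Rightarrow> 'a set" where
  "covered V E xs = (\<Union>x\<in>set xs. nbhd V E x)"

definition grundy_td_seq :: "'a set \<Rightarrow> ('a \<Rightarrow> 'a \<Rightarrow> bool) \<Rightarrow> 'a list \<Rightarrow> bool" where
  "grundy_td_seq V E xs \<longleftrightarrow> open_nbhd_seq V E xs \<and> length xs = grundy_total_dom_num V E"

definition is_leaf :: "'a set \<Rightarrow> ('a \<Rightarrow> 'a \<Rightarrow> bool) \<Rightarrow> 'a \<Rightarrow> bool" where
  "is_leaf V E v \<longleftrightarrow> v \<in> V \<and> (\<exists>s. nbhd V E v = {s})"

definition induced :: "'a set \<Rightarrow> ('a \<Rightarrow> 'a \<Rightarrow> bool) \<Rightarrow> 'a \<Rightarrow> 'a \<Rightarrow> bool" where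
  "induced W E u v \<longleftrightarrow> E u v \<and> u \<in> W \<and> v \<in> W"

section \<open>Open neighbourhood sequences\<close>

lemma covered_simps [simp]:
  "covered V E [] = {}"
  "covered V E (x # xs) = nbhd V E x \<union> covered V E xs"
  "covered V E (xs @ ys) = covered V E xs \<union> covered V E ys"
  by (auto simp: covered_def)

lemma nbhd_subset: "nbhd V E v \<subseteq> V"
  by (auto simp: nbhd_def)

lemma nbhd_induced:
  "W \<subseteq> V \<Longrightarrow> nbhd W (induced W E) u = (if u \<in> W then nbhd V E u \<inter> W else {})"
  by (auto simp: nbhd_def induced_def)

lemma covered_induced:
  "W \<subseteq> V \<Longrightarrow> set xs \<subseteq> W \<Longrightarrow> covered W (induced W E) xs = covered V E xs \<inter> W"
  by (auto simp: covered_def nbhd_induced)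

lemma open_nbhd_seq_Nil [simp]: "open_nbhd_seq V E []"
  by (simp add: open_nbhd_seq_def)

lemma open_nbhd_seq_snoc:
  "open_nbhd_seq V E (xs @ [x]) \<longleftrightarrow>
     open_nbhd_seq V E xs \<and> x \<notin> set xs \<and> x \<in> V \<and> nbhd V E x - covered V E xs \<noteq> {}"
proof -
  have prefix: "(\<Union>j<i. nbhd V E ((xs @ [x]) ! j)) = (\<Union>j<i. nbhd V E (xs ! j))"
    if "i \<le> length xs" for i
    using that by (auto simp: nth_append)
  have "(\<Union>j<length xs. nbhd V E (xs ! j)) = covered V E xs"
    by (auto simp: covered_def set_conv_nth)
  then show ?thesis
    unfolding open_nbhd_seq_def
    by (auto simp: prefix nth_append less_Suc_eq)
qed

lemma open_nbhd_seq_distinct: "open_nbhd_seq V E xs \<Longrightarrow> distinct xs"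
  and open_nbhd_seq_subset: "open_nbhd_seq V E xs \<Longrightarrow> set xs \<subseteq> V"
  by (auto simp: open_nbhd_seq_def)

lemma open_nbhd_seq_appendD: "open_nbhd_seq V E (xs @ ys) \<Longrightarrow> open_nbhd_seq V E xs"
  by (induction ys rule: rev_induct) (simp_all add: open_nbhd_seq_snoc flip: append_assoc)

lemma open_nbhd_seq_private:
  "open_nbhd_seq V E (xs @ x # ys) \<Longrightarrow> nbhd V E x - covered V E xs \<noteq> {}"
  using open_nbhd_seq_appendD[of V E "xs @ [x]" ys] by (simp add: open_nbhd_seq_snoc)

lemma private_nbhd_unique:
  assumes "as @ x # r = bs @ y # q"
    and "w \<in> nbhd V E x - covered V E as" and "w \<in> nbhd V E y - covered V E bs"
  shows "x = y"
  using assms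
proof (induction as arbitrary: bs)
  case Nil
  then show ?case by (cases bs) auto
next
  case (Cons a as)
  then show ?case by (cases bs) auto
qed

lemma private_nbhd_owner:
  obtains c where "\<And>as x r. xs = as @ x # r \<Longrightarrow> w \<in> nbhd V E x - covered V E as \<Longrightarrow> x = c"
proof (cases "\<exists>as x r. xs = as @ x # r \<and> w \<in> nbhd V E x - covered V E as")
  case True
  then obtain as x r where "xs = as @ x # r" "w \<in> nbhd V E x - covered V E as"
    by blast
  then show ?thesis
    using that[of x] private_nbhd_unique[of _ x] by metis
qed blast

lemma open_nbhd_seq_same_nbhd:
  assumes seq: "open_nbhd_seq V E xs" and "a \<in> set xs" "b \<in> set xs"
    and same: "nbhd V E a = nbhd V E b"
  shows "a = b"
proof (rule ccontr)
  assume "a \<noteq> b"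
  obtain as x r where xs: "xs = as @ x # r" and x: "x \<in> {a, b}"
    and before: "\<forall>z\<in>set as. z \<notin> {a, b}"
    using split_list_first_prop[of xs "\<lambda>z. z \<in> {a, b}"] assms(2) by blast
  define y where "y = (if x = a then b else a)"
  have "y \<in> set r"
    using assms(2,3) \<open>a \<noteq> b\<close> xs x before by (auto simp: y_def)
  then obtain bs cs where "r = bs @ y # cs"
    by (meson split_list)
  with seq xs have "nbhd V E y - covered V E (as @ x # bs) \<noteq> {}"
    using open_nbhd_seq_private[of V E "as @ x # bs" y cs] by simp
  moreover have "nbhd V E y = nbhd V E x"
    using same x by (auto simp: y_def)
  ultimately show False
    by auto
qed

lemma length_le_card_if_open_nbhd_seq:
  "finite V \<Longrightarrow> open_nbhd_seq V E xs \<Longrightarrow> length xs \<le> card V"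
  by (metis card_mono distinct_card open_nbhd_seq_distinct open_nbhd_seq_subset)

lemma finite_open_nbhd_seq_lengths:
  "finite V \<Longrightarrow> finite (length ` {xs. open_nbhd_seq V E xs})"
  by (rule finite_subset[of _ "{..card V}"]) (auto dest: length_le_card_if_open_nbhd_seq)

lemma length_le_grundy_total_dom_num:
  "finite V \<Longrightarrow> open_nbhd_seq V E xs \<Longrightarrow> length xs \<le> grundy_total_dom_num V E"
  unfolding grundy_total_dom_num_def by (rule Max_ge) (auto simp: finite_open_nbhd_seq_lengths)

lemma grundy_td_seq_exists: "finite V \<Longrightarrow> \<exists>xs. grundy_td_seq V E xs"
proof -
  assume "finite V"
  then have "grundy_total_dom_num V E \<in> length ` {xs. open_nbhd_seq V E xs}"
    unfolding grundy_total_dom_num_def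
    by (intro Max_in) (auto simp: finite_open_nbhd_seq_lengths intro: exI[of _ "[]"])
  then show ?thesis
    by (auto simp: grundy_td_seq_def)
qed

lemma grundy_total_dom_num_le_card: "finite V \<Longrightarrow> grundy_total_dom_num V E \<le> card V"
  by (metis grundy_td_seq_def grundy_td_seq_exists length_le_card_if_open_nbhd_seq)

lemma open_nbhd_seq_replace:
  assumes "open_nbhd_seq V E (ys @ c # zs)" and "l \<notin> set (ys @ c # zs)" and "l \<in> V"
    and "nbhd V E l \<subseteq> nbhd V E c" and "nbhd V E l - covered V E ys \<noteq> {}"
  shows "open_nbhd_seq V E (ys @ l # zs)"
  using assms(1,2)
proof (induction zs rule: rev_induct)
  case Nil
  then show ?case
    using assms(3,5) open_nbhd_seq_appendD[of V E ys "[c]"] by (simp add: open_nbhd_seq_snoc)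
next
  case (snoc z zs)
  have "covered V E (ys @ l # zs) \<subseteq> covered V E (ys @ c # zs)"
    using assms(4) by auto
  with snoc show ?case
    using open_nbhd_seq_snoc[of V E "ys @ c # zs" z] open_nbhd_seq_snoc[of V E "ys @ l # zs" z]
    by auto
qed

lemma open_nbhd_seq_filter_induced:
  assumes "open_nbhd_seq V E xs" and "W \<subseteq> V"
    and "\<And>as x r. xs = as @ x # r \<Longrightarrow> P x \<Longrightarrow> x \<in> W \<and> (nbhd V E x - covered V E as) \<inter> W \<noteq> {}"
  shows "open_nbhd_seq W (induced W E) (filter P xs)"
  using assms(1,3)
proof (induction xs rule: rev_induct)
  case Nil
  then show ?case by simp
next
  case (snoc x xs)
  then have seq: "open_nbhd_seq V E xs" and "x \<notin> set xs"
    by (simp_all add: open_nbhd_seq_snoc)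
  have IH: "open_nbhd_seq W (induced W E) (filter P xs)"
    using snoc.IH[OF seq] snoc.prems(2) by (metis append_Cons append_assoc)
  show ?case
  proof (cases "P x")
    case True
    with snoc.prems(2)[of xs x "[]"] obtain w where
      "x \<in> W" "w \<in> W" "w \<in> nbhd V E x" "w \<notin> covered V E xs"
      by auto
    moreover have "set (filter P xs) \<subseteq> W"
      using IH by (rule open_nbhd_seq_subset)
    ultimately have "w \<in> nbhd W (induced W E) x - covered W (induced W E) (filter P xs)"
      using assms(2) by (auto simp: nbhd_induced covered_induced covered_def)
    with True IH \<open>x \<in> W\<close> \<open>x \<notin> set xs\<close> show ?thesis
      by (auto simp: open_nbhd_seq_snoc)
  qed (simp add: IH)
qed

lemma open_nbhd_seq_append_induced:
  assumes "W \<subseteq> V" and "open_nbhd_seq W (induced W E) ys" and "open_nbhd_seq V E pre"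
    and "set pre \<inter> W = {}" and "covered V E pre \<inter> W = {}"
  shows "open_nbhd_seq V E (pre @ ys)"
  using assms(2)
proof (induction ys rule: rev_induct)
  case Nil
  then show ?case using assms(3) by simp
next
  case (snoc y ys)
  then have seq: "open_nbhd_seq W (induced W E) ys" and y: "y \<notin> set ys" "y \<in> W"
    and "nbhd W (induced W E) y - covered W (induced W E) ys \<noteq> {}"
    by (simp_all add: open_nbhd_seq_snoc)
  moreover have "set ys \<subseteq> W"
    using seq by (rule open_nbhd_seq_subset)
  ultimately have "nbhd V E y - covered V E (pre @ ys) \<noteq> {}"
    using assms(1,5) by (auto simp: nbhd_induced covered_induced)
  with snoc.IH[OF seq] y assms(1,4) show ?case
    using open_nbhd_seq_snoc[of V E "pre @ ys" y] by auto
qed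

section \<open>Leaves and automorphisms\<close>

lemma leaf_nbhd_eq:
  assumes "simple_graph V E" and "is_leaf V E x" and "x \<in> nbhd V E s"
  shows "nbhd V E x = {s}"
proof -
  have "s \<in> nbhd V E x"
    using assms(1,3) by (auto simp: nbhd_def simple_graph_def)
  with assms(2) show ?thesis
    by (auto simp: is_leaf_def)
qed

lemma grundy_td_seq_insert_leaf:
  assumes "finite V" and "no_open_twins V E" and xs: "grundy_td_seq V E xs"
    and l: "is_leaf V E l" "l \<notin> set xs"
  shows "\<exists>ys. grundy_td_seq V E ys \<and> insert l (set xs \<inter> Collect (is_leaf V E)) \<subseteq> set ys"
proof -
  obtain s where s: "nbhd V E l = {s}" and "l \<in> V"
    using l(1) by (auto simp: is_leaf_def)
  have "s \<in> covered V E xs"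
  proof (rule ccontr)
    assume "s \<notin> covered V E xs"
    with xs l s \<open>l \<in> V\<close> have "open_nbhd_seq V E (xs @ [l])"
      by (simp add: grundy_td_seq_def open_nbhd_seq_snoc)
    with assms(1) xs show False
      using length_le_grundy_total_dom_num by (fastforce simp: grundy_td_seq_def)
  qed
  then obtain as c bs where split: "xs = as @ c # bs" and "s \<in> nbhd V E c"
    and first: "\<forall>y\<in>set as. s \<notin> nbhd V E y"
    using split_list_first_prop[of xs "\<lambda>x. s \<in> nbhd V E x"] by (auto simp: covered_def)
  have "open_nbhd_seq V E (as @ l # bs)"
    using xs split l s \<open>l \<in> V\<close> \<open>s \<in> nbhd V E c\<close> first
    by (intro open_nbhd_seq_replace[of V E as c bs l]) (auto simp: grundy_td_seq_def covered_def)
  moreover have "\<not> is_leaf V E c"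
  proof
    assume "is_leaf V E c"
    with \<open>s \<in> nbhd V E c\<close> s have "nbhd V E c = nbhd V E l"
      by (auto simp: is_leaf_def)
    moreover have "c \<in> V" "c \<noteq> l"
      using xs split l(2) open_nbhd_seq_subset by (fastforce simp: grundy_td_seq_def)+
    ultimately show False
      using assms(2) \<open>l \<in> V\<close> by (auto simp: no_open_twins_def open_twins_def)
  qed
  ultimately show ?thesis
    using xs split by (auto simp: grundy_td_seq_def)
qed

lemma grundy_td_seq_containing_leaves:
  assumes "finite V" and "no_open_twins V E"
  shows "\<exists>ys. grundy_td_seq V E ys \<and> Collect (is_leaf V E) \<subseteq> set ys"
proof -
  let ?L = "Collect (is_leaf V E)"
  have "finite ?L"
    using assms(1) by (rule rev_finite_subset) (auto simp: is_leaf_def)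
  have "\<exists>ys. grundy_td_seq V E ys \<and> ?L \<subseteq> set ys"
    if "grundy_td_seq V E xs" "card (?L - set xs) = m" for xs m
    using that
  proof (induction m arbitrary: xs rule: less_induct)
    case (less m)
    show ?case
    proof (cases "?L \<subseteq> set xs")
      case False
      then obtain l where "is_leaf V E l" "l \<notin> set xs"
        by auto
      with grundy_td_seq_insert_leaf[OF assms less.prems(1)] obtain ys
        where ys: "grundy_td_seq V E ys" "insert l (set xs \<inter> ?L) \<subseteq> set ys"
        by blast
      with \<open>is_leaf V E l\<close> \<open>l \<notin> set xs\<close> have "?L - set ys \<subset> ?L - set xs"
        by auto
      with \<open>finite ?L\<close> less.prems(2) have "card (?L - set ys) < m"
        by (metis psubset_card_mono finite_Diff)
      with less.IH ys(1) show ?thesis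
        by blast
    qed (use less.prems in blast)
  qed
  with grundy_td_seq_exists[OF assms(1)] show ?thesis
    by blast
qed

lemma automorphism_nbhd:
  assumes "automorphism V E f" and "v \<in> V"
  shows "nbhd V E (f v) = f ` nbhd V E v"
proof -
  have bij: "bij_betw f V V" and edges: "\<And>u w. u \<in> V \<Longrightarrow> w \<in> V \<Longrightarrow> E (f u) (f w) \<longleftrightarrow> E u w"
    using assms(1) by (auto simp: automorphism_def)
  have "nbhd V E (f v) = {x \<in> f ` V. E (f v) x}"
    using bij by (simp add: nbhd_def bij_betw_def)
  also have "\<dots> = f ` nbhd V E v"
    using edges assms(2) by (auto simp: nbhd_def)
  finally show ?thesis .
qed

lemma automorphism_leaves:
  assumes "finite V" and "automorphism V E f"
  shows "f ` Collect (is_leaf V E) = Collect (is_leaf V E)"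
proof -
  let ?L = "Collect (is_leaf V E)"
  have bij: "bij_betw f V V"
    using assms(2) by (simp add: automorphism_def)
  have "f ` ?L \<subseteq> ?L"
    using bij automorphism_nbhd[OF assms(2)] by (auto simp: is_leaf_def bij_betw_apply)
  moreover have "finite ?L" "?L \<subseteq> V"
    using assms(1) by (auto simp: is_leaf_def intro: rev_finite_subset)
  moreover have "inj_on f ?L"
    using bij \<open>?L \<subseteq> V\<close> by (auto simp: bij_betw_def intro: inj_on_subset)
  ultimately show ?thesis
    by (metis card_image card_subset_eq)
qed

section \<open>Forests\<close>

lemma cycle_if_nonbacktracking_walk:
  assumes "finite W" and "W \<subseteq> V" and irrefl: "\<And>v. \<not> E v v"
    and walk: "\<And>n. f n \<in> W" "\<And>n. E (f n) (f (Suc n))"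
    and nonbacktracking: "\<And>n. f (Suc (Suc n)) \<noteq> f n"
  shows "\<exists>cs. is_cycle V E cs"
proof -
  have "\<not> inj_on f {..card W}"
  proof
    assume "inj_on f {..card W}"
    then have "card (f ` {..card W}) = Suc (card W)"
      by (simp add: card_image)
    moreover have "card (f ` {..card W}) \<le> card W"
      using walk(1) assms(1) by (intro card_mono) auto
    ultimately show False
      by simp
  qed
  then have "\<exists>j. \<exists>i<j. f i = f j"
    unfolding inj_on_def by (metis linorder_neqE_nat)
  define j where "j = (LEAST j. \<exists>i<j. f i = f j)"
  obtain i where ij: "i < j" "f i = f j"
    using LeastI_ex[OF \<open>\<exists>j. \<exists>i<j. f i = f j\<close>] by (auto simp: j_def)
  have distinct_before_j: "f a \<noteq> f b" if "a < b" "b < j" for a b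
    using that not_less_Least[of b "\<lambda>j. \<exists>i<j. f i = f j"] by (auto simp: j_def)
  have "j \<noteq> Suc i" "j \<noteq> Suc (Suc i)"
    using ij irrefl[of "f i"] walk(2)[of i] nonbacktracking[of i] by auto
  then have "is_cycle V E (map f [i..<j])"
    unfolding is_cycle_def
  proof (intro conjI allI impI)
    show "distinct (map f [i..<j])"
      unfolding distinct_map using distinct_before_j
      by (auto simp: inj_on_def) (metis linorder_neqE_nat)
    have "E (f (j - 1)) (f j)"
      using walk(2)[of "j - 1"] ij by simp
    then show "E (last (map f [i..<j])) (hd (map f [i..<j]))"
      using ij by (simp add: last_map hd_map hd_upt)
  qed (use ij walk assms(2) in auto)
  then show ?thesis
    by blast
qed

lemma cycle_if_min_degree_two:
  assumes "simple_graph V E" and "W \<subseteq> V" and "w \<in> W"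
    and two_nbrs: "\<forall>v\<in>W. \<exists>x\<in>W. \<exists>y\<in>W. x \<noteq> y \<and> E v x \<and> E v y"
  shows "\<exists>cs. is_cycle V E cs"
proof -
  have other_nbr: "\<exists>y\<in>W. E v y \<and> y \<noteq> u" if "v \<in> W" for u v
    using two_nbrs that by metis
  then obtain w' where "w' \<in> W" "E w w'"
    using \<open>w \<in> W\<close> by blast
  \<comment> \<open>walk on directed edges, never returning along the edge just used\<close>
  have "\<exists>g. \<forall>n. (fst (g n) \<in> W \<and> snd (g n) \<in> W \<and> E (fst (g n)) (snd (g n)))
              \<and> fst (g (Suc n)) = snd (g n) \<and> snd (g (Suc n)) \<noteq> fst (g n)"
  proof (rule dependent_nat_choice)
    show "\<exists>p. fst p \<in> W \<and> snd p \<in> W \<and> E (fst p) (snd p)"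
      using \<open>w \<in> W\<close> \<open>w' \<in> W\<close> \<open>E w w'\<close> by auto
  next
    fix p :: "'a \<times> 'a" and n
    assume "fst p \<in> W \<and> snd p \<in> W \<and> E (fst p) (snd p)"
    then obtain y where "y \<in> W" "E (snd p) y" "y \<noteq> fst p"
      using other_nbr by blast
    then show "\<exists>q. (fst q \<in> W \<and> snd q \<in> W \<and> E (fst q) (snd q))
                   \<and> fst q = snd p \<and> snd q \<noteq> fst p"
      using \<open>fst p \<in> W \<and> snd p \<in> W \<and> E (fst p) (snd p)\<close> by (intro exI[of _ "(snd p, y)"]) auto
  qed
  then obtain g where g: "\<And>n. fst (g n) \<in> W" "\<And>n. E (fst (g n)) (snd (g n))"
    "\<And>n. fst (g (Suc n)) = snd (g n)" "\<And>n. snd (g (Suc n)) \<noteq> fst (g n)"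
    by blast
  show ?thesis
  proof (rule cycle_if_nonbacktracking_walk[of W V E "fst \<circ> g"])
    show "finite W"
      using assms(1,2) by (auto simp: simple_graph_def intro: finite_subset)
  qed (use assms(1,2) g in \<open>auto simp: simple_graph_def\<close>)
qed

lemma forest_has_low_degree_vertex:
  assumes "forest V E" and "W \<subseteq> V" and "W \<noteq> {}"
  shows "\<exists>w\<in>W. \<exists>u. \<forall>x\<in>W. E w x \<longrightarrow> x = u"
proof (rule ccontr)
  assume "\<not> ?thesis"
  then have "\<forall>v\<in>W. \<exists>x\<in>W. \<exists>y\<in>W. x \<noteq> y \<and> E v x \<and> E v y"
    by metis
  with assms show False
    using cycle_if_min_degree_two[of V E W] by (auto simp: forest_def)
qed

lemma forest_leaf_support:
  assumes "forest V E" and "no_isolated V E" and "V \<noteq> {}"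
  shows "\<exists>l s u. l \<in> V \<and> nbhd V E l = {s} \<and> (\<forall>x\<in>nbhd V E s. is_leaf V E x \<or> x = u)"
proof -
  have graph: "simple_graph V E"
    using assms(1) by (simp add: forest_def)
  define W where "W = V - Collect (is_leaf V E)"
  show ?thesis
  proof (cases "W = {}")
    case True
    with assms(3) obtain v s where "v \<in> V" "nbhd V E v = {s}"
      unfolding W_def is_leaf_def by blast
    moreover have "\<forall>x\<in>nbhd V E s. is_leaf V E x"
      using True nbhd_subset[of V E s] by (auto simp: W_def)
    ultimately show ?thesis
      by blast
  next
    case False
    moreover have "W \<subseteq> V"
      by (auto simp: W_def)
    ultimately obtain s u where "s \<in> W" and low: "\<forall>x\<in>W. E s x \<longrightarrow> x = u"
      using forest_has_low_degree_vertex[OF assms(1)] by blast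
    have "\<not> nbhd V E s \<subseteq> W"
    proof
      assume "nbhd V E s \<subseteq> W"
      with low have "nbhd V E s \<subseteq> {u}"
        by (auto simp: nbhd_def)
      moreover have "nbhd V E s \<noteq> {}"
        using assms(2) \<open>s \<in> W\<close> by (auto simp: no_isolated_def W_def)
      ultimately show False
        using \<open>s \<in> W\<close> by (auto simp: W_def is_leaf_def subset_singleton_iff)
    qed
    then obtain l where "l \<in> nbhd V E s" "is_leaf V E l"
      using nbhd_subset[of V E s] by (auto simp: W_def)
    then have "l \<in> V" "nbhd V E l = {s}"
      using leaf_nbhd_eq[OF graph] nbhd_subset[of V E s] by auto
    moreover have "\<forall>x\<in>nbhd V E s. is_leaf V E x \<or> x = u"
      using low nbhd_subset[of V E s] by (auto simp: W_def nbhd_def)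
    ultimately show ?thesis
      by blast
  qed
qed

lemma forest_induced:
  assumes "forest V E" and "W \<subseteq> V"
  shows "forest W (induced W E)"
proof -
  have "is_cycle V E cs" if "is_cycle W (induced W E) cs" for cs
    using that assms(2) by (auto simp: is_cycle_def induced_def)
  then show ?thesis
    using assms by (auto simp: forest_def simple_graph_def induced_def intro: finite_subset)
qed

section \<open>Deleting a leaf together with its support vertex\<close>

locale leaf_support =
  fixes V :: "'a set" and E :: "'a \<Rightarrow> 'a \<Rightarrow> bool" and l s :: 'a
  assumes graph: "simple_graph V E" and leaf: "l \<in> V" "nbhd V E l = {s}"
begin

abbreviation rest :: "'a set" where
  "rest \<equiv> V - {l, s}"

lemma finite_vertices: "finite V"
  using graph by (simp add: simple_graph_def)

lemma adjacent: "E l s" "E s l" "s \<in> V"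
  using leaf graph by (auto simp: nbhd_def simple_graph_def)

lemma leaf_neq_support: "l \<noteq> s"
  using adjacent graph by (auto simp: simple_graph_def)

lemma card_rest: "card V = card rest + 2"
proof -
  have "card {l, s} \<le> card V"
    using finite_vertices leaf(1) adjacent(3) by (intro card_mono) auto
  then show ?thesis
    using finite_vertices leaf(1) adjacent(3) leaf_neq_support by (simp add: card_Diff_subset)
qed

lemma rest_not_adjacent_leaf: "x \<in> rest \<Longrightarrow> l \<notin> nbhd V E x"
  using leaf graph by (auto simp: nbhd_def simple_graph_def)

lemma open_nbhd_seq_filter_rest:
  assumes seq: "open_nbhd_seq V E xs"
    and owner: "\<And>as x r. xs = as @ x # r \<Longrightarrow> s \<in> nbhd V E x - covered V E as \<Longrightarrow> x = c"
  shows "open_nbhd_seq rest (induced rest E) (filter (\<lambda>x. x \<notin> {l, s, c}) xs)"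
proof (rule open_nbhd_seq_filter_induced[OF seq])
  fix as x r
  assume split: "xs = as @ x # r" and "x \<notin> {l, s, c}"
  then have "x \<in> rest"
    using open_nbhd_seq_subset[OF seq] by auto
  then have "l \<notin> nbhd V E x"
    by (rule rest_not_adjacent_leaf)
  moreover have "s \<notin> nbhd V E x - covered V E as"
    using owner split \<open>x \<notin> {l, s, c}\<close> by blast
  moreover have "nbhd V E x - covered V E as \<noteq> {}"
    using seq split open_nbhd_seq_private by metis
  ultimately show "x \<in> rest \<and> (nbhd V E x - covered V E as) \<inter> rest \<noteq> {}"
    using \<open>x \<in> rest\<close> nbhd_subset[of V E x] by blast
qed auto

lemma grundy_le_rest:
  "grundy_total_dom_num V E \<le> grundy_total_dom_num rest (induced rest E) + 2"
proof -
  obtain xs where xs: "grundy_td_seq V E xs"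
    using grundy_td_seq_exists[OF finite_vertices] by blast
  then have seq: "open_nbhd_seq V E xs"
    by (simp add: grundy_td_seq_def)
  obtain c where owner: "\<And>as x r. xs = as @ x # r \<Longrightarrow> s \<in> nbhd V E x - covered V E as \<Longrightarrow> x = c"
    using private_nbhd_owner[of xs s V E] by blast
  let ?P = "\<lambda>x. x \<notin> {l, s, c}"
  have "length (filter ?P xs) \<le> grundy_total_dom_num rest (induced rest E)"
    using finite_vertices open_nbhd_seq_filter_rest[OF seq owner]
    by (intro length_le_grundy_total_dom_num) auto
  moreover have "length (filter (\<lambda>x. \<not> ?P x) xs) \<le> 2"
  proof -
    have "c = l" if "l \<in> set xs"
    proof -
      obtain as r where split: "xs = as @ l # r"
        using \<open>l \<in> set xs\<close> by (meson split_list)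
      then have "nbhd V E l - covered V E as \<noteq> {}"
        using seq open_nbhd_seq_private by metis
      then show "c = l"
        using owner[OF split] leaf(2) by auto
    qed
    then have "set (filter (\<lambda>x. \<not> ?P x) xs) \<subseteq> {s, c}"
      by auto
    moreover have "distinct (filter (\<lambda>x. \<not> ?P x) xs)"
      using open_nbhd_seq_distinct[OF seq] by simp
    ultimately have "length (filter (\<lambda>x. \<not> ?P x) xs) \<le> card {s, c}"
      by (metis card_mono distinct_card finite.emptyI finite.insertI)
    also have "\<dots> \<le> 2"
      by (simp add: card_insert_if)
    finally show ?thesis .
  qed
  ultimately show ?thesis
    using xs sum_length_filter_compl[of ?P xs] by (simp add: grundy_td_seq_def)
qed

lemma open_nbhd_seq_around_rest:
  assumes "open_nbhd_seq rest (induced rest E) ys"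
  shows "open_nbhd_seq V E (l # ys @ [s])"
proof -
  have "set ys \<subseteq> rest"
    using assms by (rule open_nbhd_seq_subset)
  have "open_nbhd_seq V E ([l] @ ys)"
    using open_nbhd_seq_snoc[of V E "[]" l] leaf
    by (intro open_nbhd_seq_append_induced[OF _ assms]) auto
  moreover have "l \<in> nbhd V E s - covered V E (l # ys)"
    using adjacent leaf leaf_neq_support rest_not_adjacent_leaf \<open>set ys \<subseteq> rest\<close>
    by (auto simp: nbhd_def covered_def)
  moreover have "s \<notin> set (l # ys)"
    using \<open>set ys \<subseteq> rest\<close> leaf_neq_support by auto
  ultimately show ?thesis
    using adjacent(3) open_nbhd_seq_snoc[of V E "l # ys" s] by auto
qed

lemma grundy_eq_rest:
  "grundy_total_dom_num V E = grundy_total_dom_num rest (induced rest E) + 2"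
proof -
  obtain ys where "grundy_td_seq rest (induced rest E) ys"
    using grundy_td_seq_exists finite_vertices by blast
  then have "length (l # ys @ [s]) \<le> grundy_total_dom_num V E"
    using open_nbhd_seq_around_rest finite_vertices
    by (intro length_le_grundy_total_dom_num) (auto simp: grundy_td_seq_def)
  with grundy_le_rest \<open>grundy_td_seq rest (induced rest E) ys\<close> show ?thesis
    by (simp add: grundy_td_seq_def)
qed

lemma no_isolated_rest:
  assumes "no_isolated V E" and only_leaf: "\<forall>x\<in>nbhd V E s. is_leaf V E x \<longrightarrow> x = l"
  shows "no_isolated rest (induced rest E)"
  unfolding no_isolated_def
proof
  fix v
  assume v: "v \<in> rest"
  show "nbhd rest (induced rest E) v \<noteq> {}"
  proof
    assume "nbhd rest (induced rest E) v = {}"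
    then have "nbhd V E v \<subseteq> {l, s}"
      using v nbhd_induced[of rest V E v] nbhd_subset[of V E v] by auto
    moreover have "l \<notin> nbhd V E v" "nbhd V E v \<noteq> {}"
      using v rest_not_adjacent_leaf assms(1) by (auto simp: no_isolated_def)
    ultimately have "nbhd V E v = {s}"
      by auto
    then have "is_leaf V E v" "v \<in> nbhd V E s"
      using v graph by (auto simp: is_leaf_def nbhd_def simple_graph_def)
    with only_leaf v show False
      by auto
  qed
qed

lemma open_nbhd_seq_rest_append_support:
  assumes support: "nbhd V E s \<subseteq> {l, u}" and "u \<in> rest" and "E s u"
    and seq: "open_nbhd_seq rest (induced rest E) ys" and "u \<notin> set ys"
  shows "open_nbhd_seq V E (ys @ [s] @ [u])"
proof -
  have "set ys \<subseteq> rest"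
    using seq by (rule open_nbhd_seq_subset)
  have "open_nbhd_seq V E ys"
    using open_nbhd_seq_append_induced[of rest V E ys "[]"] seq by auto
  moreover have "l \<in> nbhd V E s - covered V E ys"
    using adjacent leaf(1) rest_not_adjacent_leaf \<open>set ys \<subseteq> rest\<close>
    by (auto simp: nbhd_def covered_def)
  ultimately have "open_nbhd_seq V E (ys @ [s])"
    using adjacent(3) \<open>set ys \<subseteq> rest\<close> by (auto simp: open_nbhd_seq_snoc)
  moreover have "s \<in> nbhd V E u - covered V E (ys @ [s])"
  proof -
    have "y = u" if "y \<in> set ys" "s \<in> nbhd V E y" for y
      using that support \<open>set ys \<subseteq> rest\<close> graph by (auto simp: nbhd_def simple_graph_def)
    then have "s \<notin> covered V E ys"
      using \<open>u \<notin> set ys\<close> by (auto simp: covered_def)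
    then show ?thesis
      using \<open>E s u\<close> \<open>u \<in> rest\<close> adjacent(3) graph by (auto simp: nbhd_def simple_graph_def)
  qed
  ultimately show ?thesis
    using open_nbhd_seq_snoc[of V E "ys @ [s]" u] \<open>u \<notin> set ys\<close> \<open>u \<in> rest\<close> by auto
qed

lemma is_leaf_rest:
  assumes "is_leaf rest (induced rest E) v" and "\<not> E s v"
  shows "is_leaf V E v"
proof -
  have "v \<in> rest"
    using assms(1) by (simp add: is_leaf_def)
  then have "nbhd V E v \<subseteq> rest"
    using assms(2) rest_not_adjacent_leaf[OF \<open>v \<in> rest\<close>] graph
    by (auto simp: nbhd_def simple_graph_def)
  then have "nbhd V E v = nbhd rest (induced rest E) v"
    using nbhd_induced[of rest V E v] \<open>v \<in> rest\<close> by auto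
  with assms(1) show ?thesis
    by (auto simp: is_leaf_def)
qed

lemma missing_leaf_from_rest:
  assumes support: "nbhd V E s \<subseteq> {l, u}"
    and ys: "grundy_td_seq rest (induced rest E) ys"
    and l': "is_leaf rest (induced rest E) l'" "l' \<notin> set ys"
  shows "\<exists>xs v. grundy_td_seq V E xs \<and> is_leaf V E v \<and> v \<notin> set xs"
proof -
  have seq: "open_nbhd_seq rest (induced rest E) ys"
    using ys by (simp add: grundy_td_seq_def)
  have "set ys \<subseteq> rest" "l' \<in> rest"
    using open_nbhd_seq_subset[OF seq] l'(1) by (auto simp: is_leaf_def)
  show ?thesis
  proof (cases "E s l'")
    case True
    \<comment> \<open>then l' is the non-leaf neighbour u of s, and ys, s, l' is a sequence avoiding l\<close>
    have "l' = u"
      using support True \<open>l' \<in> rest\<close> by (auto simp: nbhd_def)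
    then have "open_nbhd_seq V E (ys @ [s] @ [l'])"
      using open_nbhd_seq_rest_append_support[OF support _ _ seq] True \<open>l' \<in> rest\<close> l'(2) by blast
    moreover have "l \<notin> set (ys @ [s] @ [l'])"
      using \<open>set ys \<subseteq> rest\<close> \<open>l' \<in> rest\<close> leaf_neq_support by auto
    moreover have "length (ys @ [s] @ [l']) = grundy_total_dom_num V E"
      using ys grundy_eq_rest by (simp add: grundy_td_seq_def)
    moreover have "is_leaf V E l"
      using leaf by (simp add: is_leaf_def)
    ultimately show ?thesis
      unfolding grundy_td_seq_def by blast
  next
    case False
    \<comment> \<open>then l' is already a leaf of the whole forest, and l, ys, s avoids it\<close>
    then have "is_leaf V E l'"
      using is_leaf_rest l'(1) by blast
    moreover have "l' \<notin> set (l # ys @ [s])"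
      using l'(2) \<open>l' \<in> rest\<close> by auto
    ultimately show ?thesis
      using ys open_nbhd_seq_around_rest grundy_eq_rest by (fastforce simp: grundy_td_seq_def)
  qed
qed

end

lemma grundy_td_seq_missing_open_twin:
  assumes "finite V" and "a \<noteq> b" and "nbhd V E a = nbhd V E b"
  shows "\<exists>xs. grundy_td_seq V E xs \<and> (a \<notin> set xs \<or> b \<notin> set xs)"
proof -
  obtain xs where "grundy_td_seq V E xs"
    using grundy_td_seq_exists[OF assms(1)] by blast
  with open_nbhd_seq_same_nbhd[of V E xs a b] assms(2,3) show ?thesis
    by (auto simp: grundy_td_seq_def)
qed

lemma grundy_td_seq_missing_leaf:
  assumes "forest V E" and "no_isolated V E" and "grundy_total_dom_num V E < card V"
  shows "\<exists>xs v. grundy_td_seq V E xs \<and> is_leaf V E v \<and> v \<notin> set xs"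
  using assms
proof (induction "card V" arbitrary: V E rule: less_induct)
  case less
  have "V \<noteq> {}"
    using less.prems(3) by auto
  with less.prems obtain l s u where "l \<in> V" "nbhd V E l = {s}"
    and support: "\<forall>x\<in>nbhd V E s. is_leaf V E x \<or> x = u"
    using forest_leaf_support by blast
  moreover have graph: "simple_graph V E"
    using less.prems(1) by (simp add: forest_def)
  ultimately interpret leaf_support V E l s
    by unfold_locales
  show ?case
  proof (cases "\<exists>l2\<in>nbhd V E s. is_leaf V E l2 \<and> l2 \<noteq> l")
    case True
    then obtain l2 where "l2 \<in> nbhd V E s" "is_leaf V E l2" "l2 \<noteq> l"
      by blast
    then have "nbhd V E l2 = nbhd V E l"
      using leaf_nbhd_eq[OF graph] leaf(2) by simp
    then obtain xs where "grundy_td_seq V E xs" "l2 \<notin> set xs \<or> l \<notin> set xs"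
      using grundy_td_seq_missing_open_twin[OF finite_vertices \<open>l2 \<noteq> l\<close>] by blast
    with \<open>is_leaf V E l2\<close> leaf show ?thesis
      by (auto simp: is_leaf_def)
  next
    case False
    then have only_leaf: "\<forall>x\<in>nbhd V E s. is_leaf V E x \<longrightarrow> x = l"
      by blast
    with support have "nbhd V E s \<subseteq> {l, u}"
      by blast
    have "card rest < card V"
      using card_rest by simp
    moreover have "forest rest (induced rest E)" "no_isolated rest (induced rest E)"
      using forest_induced[OF less.prems(1)] no_isolated_rest[OF less.prems(2) only_leaf] by auto
    moreover have "grundy_total_dom_num rest (induced rest E) < card rest"
      using less.prems(3) grundy_eq_rest card_rest by simp
    ultimately obtain ys l' where "grundy_td_seq rest (induced rest E) ys"
      "is_leaf rest (induced rest E) l'" "l' \<notin> set ys"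
      using less.hyps[of rest "induced rest E"] by blast
    then show ?thesis
      using missing_leaf_from_rest[OF \<open>nbhd V E s \<subseteq> {l, u}\<close>] by blast
  qed
qed

lemma iso_unique_grundy_td_seq_contains_leaves:
  assumes "finite V" and "no_open_twins V E" and iso: "iso_unique_grundy_total V E"
    and xs: "grundy_td_seq V E xs"
  shows "Collect (is_leaf V E) \<subseteq> set xs"
proof -
  obtain ys where ys: "grundy_td_seq V E ys" "Collect (is_leaf V E) \<subseteq> set ys"
    using grundy_td_seq_containing_leaves[OF assms(1,2)] by blast
  have "grundy_total_dom_set V E (set ys)" "grundy_total_dom_set V E (set xs)"
    using xs ys(1) by (auto simp: grundy_total_dom_set_def grundy_td_seq_def)
  with iso obtain f where "automorphism V E f" "f ` set ys = set xs"
    unfolding iso_unique_grundy_total_def by blast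
  then show ?thesis
    using automorphism_leaves[OF assms(1)] ys(2) by (metis image_mono)
qed

lemma grundy_total_dom_set_eq_vertices:
  assumes "finite V" and "grundy_total_dom_num V E = card V" and "grundy_total_dom_set V E A"
  shows "A = V"
proof -
  obtain xs where xs: "open_nbhd_seq V E xs" "length xs = card V" "set xs = A"
    using assms(2,3) by (auto simp: grundy_total_dom_set_def)
  then have "card A = card V"
    using distinct_card[OF open_nbhd_seq_distinct] by metis
  with assms(1) xs show ?thesis
    using card_subset_eq open_nbhd_seq_subset by metis
qed

lemma iso_unique_if_grundy_eq_card:
  assumes "finite V" and "grundy_total_dom_num V E = card V"
  shows "iso_unique_grundy_total V E"
  unfolding iso_unique_grundy_total_def
proof (intro allI impI)
  fix A B
  assume "grundy_total_dom_set V E A \<and> grundy_total_dom_set V E B"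
  then have "A = V" "B = V"
    using grundy_total_dom_set_eq_vertices[OF assms] by auto
  then show "\<exists>\<phi>. automorphism V E \<phi> \<and> \<phi> ` A = B"
    by (intro exI[of _ id]) (simp add: automorphism_def)
qed

theorem theorem5p6:
  fixes V :: "'a set" and E :: "'a \<Rightarrow> 'a \<Rightarrow> bool"
  assumes "forest V E" and "no_isolated V E" and "no_open_twins V E"
  shows "iso_unique_grundy_total V E \<longleftrightarrow> grundy_total_dom_num V E = card V"
proof -
  have "finite V"
    using assms(1) by (simp add: forest_def simple_graph_def)
  show ?thesis
  proof
    assume iso: "iso_unique_grundy_total V E"
    show "grundy_total_dom_num V E = card V"
    proof (rule ccontr)
      assume "grundy_total_dom_num V E \<noteq> card V"
      with grundy_total_dom_num_le_card[OF \<open>finite V\<close>]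
      have "grundy_total_dom_num V E < card V"
        by (simp add: order_less_le)
      then obtain xs v where "grundy_td_seq V E xs" "is_leaf V E v" "v \<notin> set xs"
        using grundy_td_seq_missing_leaf assms(1,2) by blast
      with iso_unique_grundy_td_seq_contains_leaves[OF \<open>finite V\<close> assms(3) iso] show False
        by blast
    qed
  qed (rule iso_unique_if_grundy_eq_card[OF \<open>finite V\<close>])
qed

end
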